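(* Let $N\ge 2$ and let $\mu_1,\dots,\mu_N$ be real numbers with $\mu_1\le 0<\mu_2<\mu_3<\cdots<\mu_N$. Let $\delta$ be a sufficiently small positive constant ($0<\delta\ll1$). Let $\pi_1$ satisfy $0<\pi_1\le\frac{\mu_N-\delta}{\mu_N-\mu_1}$. Let $f:\mathbb R^+\to\mathbb R^+$ be a differentiable function with $f'(\mu)\ge 0$ for all $\mu>0$, and let $f(\mu_1)$ denote an arbitrary given real constant. Consider the problem of minimizing $$\Phi(\pi_2,\dots,\pi_N)=\pi_1 f(\mu_1)+\sum_{j=2}^N\pi_j f(\mu_j)$$ over all $(\pi_2,\dots,\pi_N)$ satisfying $$\sum_{j=2}^N\pi_j\mu_j\ge-\pi_1\mu_1+\delta,\qquad \sum_{j=2}^N\pi_j=1-\pi_1,\qquad \pi_j\ge0\ (2\le j\le N).$$ Define $k^*$ as the index in $\{2,\dots,N\}$ with $$\mu_{k^*}=\min\Big\{\mu_k:\ \mu_k>\frac{-\pi_1\mu_1}{1-\pi_1},\ 2\le k\le N\Big\},$$ and for $2\le l<m\le N$ define $$F(\mu_l,\mu_m)=\pi_1 f(\mu_1)+\frac{f(\mu_m)-f(\mu_l)}{\mu_m-\mu_l}(\delta-\pi_1\mu_1)+\frac{\mu_m f(\mu_l)-\mu_l f(\mu_m)}{\mu_m-\mu_l}(1-\pi_1).$$ Then: (1) If $k^*=2$, the minimal value of $\Phi$ under the constraints is $\pi_1 f(\mu_1)+(1-\pi_1)f(\mu_2)$, attained by $\pi_2=1-\pi_1$ and $\pi_j=0$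 for $j\ge3$. (2) If $k^*>2$, the minimal value of $\Phi$ under the constraints is $$\min_{2\le l<k^*\le m\le N}F(\mu_l,\mu_m),$$ and, writing $(l^*,m^* )$ for a minimizing pair, it is attained by $\pi_j=0$ for $j\notin\{l^*,m^*\}$ and $$\begin{pmatrix}\pi_{l^*}\\ \pi_{m^*}\end{pmatrix}=\frac{1}{\mu_{m^*}-\mu_{l^*}}\begin{pmatrix}(\mu_{m^*}-\delta)+\pi_1(\mu_1-\mu_{m^*})\\ -(\mu_{l^*}-\delta)+\pi_1(\mu_{l^*}-\mu_1)\end{pmatrix}.$$
   Context: Interpretation (cyber epidemic model with a fixed attack-defense graph $G$ with adjacency matrix $A$): configurations are $\mathcal C_j=(G,\beta_j,\gamma_j)$ with cure probability $\beta_j$ and infection probability $\gamma_j$; $\lambda_1(A)$ is the eigenvalue of $A$ of largest modulus and $\mu_j=\beta_j-\gamma_j\lambda_1(A)$. $\mathcal C_1$ violates the epidemic-threshold condition $\mu>0$ and the system must stay in it for the portion of time $\pi_1$; $\mathcal C_2,\dots,\mathcal C_N$ are moving-target-defense-induced configurations satisfying $\mu_j>0$, with portions of time $\pi_j$. $f(\mu_j)$ is the cost of inducing $\mathcal C_j$, and the constraint $\sum_{j\ge2}\pi_j\mu_j\ge-\pi_1\mu_1+\delta$ is the (strictified) sufficient condition for the infection dying out. *)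

theory Defs
  imports "HOL-Analysis.Analysis"
begin

text \<open>Configurations are indexed 1..N; mu j is mu_j, p j is pi_j for 2 <= j <= N.
  c is the given constant f(mu_1).\<close>

definition feasible :: "nat \<Rightarrow> (nat \<Rightarrow> real) \<Rightarrow> real \<Rightarrow> real \<Rightarrow> (nat \<Rightarrow> real) \<Rightarrow> bool" where
  "feasible N mu pi1 \<delta> p \<longleftrightarrow>
     (\<Sum>j=2..N. p j * mu j) \<ge> - pi1 * mu 1 + \<delta> \<and>
     (\<Sum>j=2..N. p j) = 1 - pi1 \<and>
     (\<forall>j\<in>{2..N}. p j \<ge> 0)"

definition Phi :: "nat \<Rightarrow> (nat \<Rightarrow> real) \<Rightarrow> (real \<Rightarrow> real) \<Rightarrow> real \<Rightarrow> real \<Rightarrow> (nat \<Rightarrow> real) \<Rightarrow> real" where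
  "Phi N mu f c pi1 p = pi1 * c + (\<Sum>j=2..N. p j * f (mu j))"

definition kstar :: "nat \<Rightarrow> (nat \<Rightarrow> real) \<Rightarrow> real \<Rightarrow> nat" where
  "kstar N mu pi1 = (THE k. k \<in> {2..N} \<and>
      mu k = Min {mu k' | k'. k' \<in> {2..N} \<and> mu k' > - pi1 * mu 1 / (1 - pi1)})"

definition Fpair :: "(nat \<Rightarrow> real) \<Rightarrow> (real \<Rightarrow> real) \<Rightarrow> real \<Rightarrow> real \<Rightarrow> real \<Rightarrow> nat \<Rightarrow> nat \<Rightarrow> real" where
  "Fpair mu f c pi1 \<delta> l m =
     pi1 * c
     + (f (mu m) - f (mu l)) / (mu m - mu l) * (\<delta> - pi1 * mu 1)
     + (mu m * f (mu l) - mu l * f (mu m)) / (mu m - mu l) * (1 - pi1)"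

end

theory Submission
  imports Defs
begin

text \<open>Write \<open>s = 1 - \<pi>\<^sub>1\<close> and \<open>t = \<delta> - \<pi>\<^sub>1\<mu>\<^sub>1\<close>; the problem is the linear program
  of minimising \<open>\<Sum> \<pi>\<^sub>j f(\<mu>\<^sub>j)\<close> over weights of total mass \<open>s\<close> with moment
  \<open>\<Sum> \<pi>\<^sub>j \<mu>\<^sub>j \<ge> t\<close>. For \<open>\<delta>\<close> small the index \<open>k\<^sup>*\<close> splits the configurations strictly:
  \<open>s\<mu>\<^sub>j < t\<close> for \<open>j < k\<^sup>*\<close> and \<open>t < s\<mu>\<^sub>j\<close> for \<open>j \<ge> k\<^sup>*\<close>. Since \<open>f\<close> is nondecreasing,
  if \<open>k\<^sup>* = 2\<close> all mass on \<open>\<mu>\<^sub>2\<close> is optimal. Otherwise \<open>F(\<mu>\<^sub>l, \<mu>\<^sub>m) - \<pi>\<^sub>1 f(\<mu>\<^sub>1)\<close> is the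
  cost of the unique two-point allocation on \<open>{l, m}\<close>, namely \<open>a s + b t\<close> for the
  line \<open>a + b x\<close> through \<open>(\<mu>\<^sub>l, f(\<mu>\<^sub>l))\<close> and \<open>(\<mu>\<^sub>m, f(\<mu>\<^sub>m))\<close>. For a minimising pair this line lies
  below every point \<open>(\<mu>\<^sub>j, f(\<mu>\<^sub>j))\<close> (a point below it would give a cheaper pair with \<open>j\<close>),
  and its slope is nonnegative; integrating it against any feasible allocation is weak
  LP duality and bounds the cost from below by \<open>F(\<mu>\<^sub>l, \<mu>\<^sub>m)\<close>.\<close>

lemma mono_on_greaterThan_if_deriv_nonneg:
  fixes f :: "real \<Rightarrow> real"
  assumes "\<forall>x>0. f differentiable (at x)" and "\<forall>x>0. deriv f x \<ge> 0"
  shows "mono_on {0<..} f"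
proof (rule mono_onI)
  fix a b :: real assume "a \<in> {0<..}" "a \<le> b"
  show "f a \<le> f b"
  proof (rule DERIV_nonneg_imp_nondecreasing[OF \<open>a \<le> b\<close>])
    fix x assume "a \<le> x"
    with \<open>a \<in> {0<..}\<close> have "x > 0" by simp
    then have "DERIV f x :> deriv f x"
      using assms(1) by (simp add: DERIV_deriv_iff_real_differentiable)
    with assms(2) \<open>x > 0\<close> show "\<exists>y. DERIV f x :> y \<and> y \<ge> 0" by blast
  qed
qed

lemma finite_positive_lower_bound:
  fixes A :: "real set"
  assumes "finite A"
  obtains d where "0 < d" "\<And>x. x \<in> A \<Longrightarrow> 0 < x \<Longrightarrow> d \<le> x"
proof
  show "0 < Min (insert 1 {x\<in>A. 0 < x})" using assms by simp
  show "Min (insert 1 {x\<in>A. 0 < x}) \<le> x" if "x \<in> A" "0 < x" for x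
    using assms that by (intro Min_le) auto
qed

lemma sum_if_eq_point:
  fixes w :: "'a \<Rightarrow> 'b::comm_ring"
  assumes "finite A" "a \<in> A"
  shows "(\<Sum>j\<in>A. (if j = a then X else 0) * w j) = X * w a"
proof -
  have "(\<Sum>j\<in>A. (if j = a then X else 0) * w j) = (\<Sum>j\<in>A. if j = a then X * w a else 0)"
    by (rule sum.cong) auto
  with assms show ?thesis by simp
qed

lemma sum_if_eq_two_points:
  fixes w :: "'a \<Rightarrow> 'b::comm_ring"
  assumes "finite A" "l \<in> A" "m \<in> A" "l \<noteq> m"
  shows "(\<Sum>j\<in>A. (if j = l then X else if j = m then Y else 0) * w j) = X * w l + Y * w m"
proof -
  have "(\<Sum>j\<in>A. (if j = l then X else if j = m then Y else 0) * w j)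
      = (\<Sum>j\<in>{l,m}. (if j = l then X else if j = m then Y else 0) * w j)"
    by (rule sum.mono_neutral_right) (use assms in auto)
  with assms show ?thesis by simp
qed

lemma affine_minorant_sum_bound:
  fixes p x y :: "'a \<Rightarrow> real"
  assumes "\<And>j. j \<in> I \<Longrightarrow> 0 \<le> p j" "sum p I = s" "t \<le> (\<Sum>j\<in>I. p j * x j)" "0 \<le> b"
    and minorant: "\<And>j. j \<in> I \<Longrightarrow> a + b * x j \<le> y j"
  shows "a * s + b * t \<le> (\<Sum>j\<in>I. p j * y j)"
proof -
  have "a * s + b * t \<le> a * sum p I + b * (\<Sum>j\<in>I. p j * x j)"
    using assms(2-4) by (simp add: mult_left_mono)
  also have "\<dots> = (\<Sum>j\<in>I. p j * (a + b * x j))"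
    by (simp add: algebra_simps sum.distrib sum_distrib_left)
  also have "\<dots> \<le> (\<Sum>j\<in>I. p j * y j)"
    using assms(1) minorant by (intro sum_mono mult_left_mono) auto
  finally show ?thesis .
qed

text \<open>The cost of the unique allocation of total mass \<open>s\<close> and moment \<open>t\<close> supported on the
  two points \<open>xl, xm\<close>, i.e. \<open>s\<close> times the value at \<open>t / s\<close> of the chord through
  \<open>(xl, yl)\<close> and \<open>(xm, ym)\<close>.\<close>

definition chord_value :: "real \<Rightarrow> real \<Rightarrow> real \<Rightarrow> real \<Rightarrow> real \<Rightarrow> real \<Rightarrow> real" where
  "chord_value s t xl yl xm ym = ((s * xm - t) * yl + (t - s * xl) * ym) / (xm - xl)"

lemma chord_value_affine:
  assumes "xl \<noteq> xm"
  shows "chord_value s t xl (a + b * xl) xm (a + b * xm) = a * s + b * t"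
proof -
  have "(s * xm - t) * (a + b * xl) + (t - s * xl) * (a + b * xm) = (a * s + b * t) * (xm - xl)"
    by (simp add: algebra_simps)
  with assms show ?thesis by (simp add: chord_value_def)
qed

lemma chord_value_decrease_left:
  "chord_value s t xl (yl - e) xm ym = chord_value s t xl yl xm ym - e * (s * xm - t) / (xm - xl)"
  unfolding chord_value_def diff_divide_distrib[symmetric]
  by (rule arg_cong[where f = "\<lambda>z. z / (xm - xl)"]) (simp add: algebra_simps)

lemma chord_value_decrease_right:
  "chord_value s t xl yl xm (ym - e) = chord_value s t xl yl xm ym - e * (t - s * xl) / (xm - xl)"
  unfolding chord_value_def diff_divide_distrib[symmetric]
  by (rule arg_cong[where f = "\<lambda>z. z / (xm - xl)"]) (simp add: algebra_simps)

lemma chord_value_minimal_imp_supporting_line: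
  fixes x y :: "'a \<Rightarrow> real"
  assumes sep: "\<And>i j. i \<in> L \<Longrightarrow> j \<in> R \<Longrightarrow> x i < x j"
    and left: "\<And>i. i \<in> L \<Longrightarrow> s * x i < t" and right: "\<And>j. j \<in> R \<Longrightarrow> t < s * x j"
    and lm: "l \<in> L" "m \<in> R"
    and minimal: "\<And>i j. i \<in> L \<Longrightarrow> j \<in> R \<Longrightarrow>
      chord_value s t (x l) (y l) (x m) (y m) \<le> chord_value s t (x i) (y i) (x j) (y j)"
    and j: "j \<in> L \<union> R"
  shows "y l + (y m - y l) / (x m - x l) * (x j - x l) \<le> y j"
  \<comment> \<open>A point below the line through \<open>l, m\<close> would replace \<open>l\<close> or \<open>m\<close> in a cheaper pair.\<close>
proof (rule ccontr)
  define b where "b = (y m - y l) / (x m - x l)"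
  define h where "h z = y l - b * x l + b * z" for z
  assume "\<not> ?thesis"
  then have "y j < h (x j)" by (simp add: h_def algebra_simps flip: b_def)
  then obtain e where e: "0 < e" "y j = h (x j) - e"
    by (intro that[of "h (x j) - y j"]) auto
  have "x l < x m" using sep lm by blast
  then have "b * (x m - x l) = y m - y l" by (simp add: b_def)
  then have hl: "h (x l) = y l" and hm: "h (x m) = y m"
    by (simp_all add: h_def algebra_simps)
  have chord_h: "chord_value s t u (h u) v (h v) = (y l - b * x l) * s + b * t" if "u \<noteq> v" for u v
    unfolding h_def using chord_value_affine[OF that] .
  from j show False
  proof
    assume "j \<in> L"
    then have "x j < x m" "0 < s * x m - t" using sep left right lm by fastforce+
    then have "chord_value s t (x j) (y j) (x m) (y m)
        = chord_value s t (x l) (y l) (x m) (y m) - e * (s * x m - t) / (x m - x j)"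
      using e chord_h \<open>x l < x m\<close> by (simp add: chord_value_decrease_left flip: hl hm)
    moreover have "0 < e * (s * x m - t) / (x m - x j)"
      using e \<open>x j < x m\<close> \<open>0 < s * x m - t\<close> by simp
    ultimately show False using minimal[OF \<open>j \<in> L\<close> lm(2)] by simp
  next
    assume "j \<in> R"
    then have "x l < x j" "0 < t - s * x l" using sep left right lm by fastforce+
    then have "chord_value s t (x l) (y l) (x j) (y j)
        = chord_value s t (x l) (y l) (x m) (y m) - e * (t - s * x l) / (x j - x l)"
      using e chord_h \<open>x l < x m\<close> by (simp add: chord_value_decrease_right flip: hl hm)
    moreover have "0 < e * (t - s * x l) / (x j - x l)"
      using e \<open>x l < x j\<close> \<open>0 < t - s * x l\<close> by simp
    ultimately show False using minimal[OF lm(1) \<open>j \<in> R\<close>] by simp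
  qed
qed

lemma two_point_allocation:
  fixes x y :: "'a \<Rightarrow> real"
  assumes "finite I" "l \<in> I" "m \<in> I" "x l < x m" "s * x l \<le> t" "t \<le> s * x m"
  defines "p \<equiv> \<lambda>j. if j = l then (s * x m - t) / (x m - x l)
                    else if j = m then (t - s * x l) / (x m - x l) else 0"
  shows "\<forall>j\<in>I. 0 \<le> p j" and "sum p I = s" and "(\<Sum>j\<in>I. p j * x j) = t"
    and "(\<Sum>j\<in>I. p j * y j) = chord_value s t (x l) (y l) (x m) (y m)"
proof -
  have "l \<noteq> m" using assms(4) by auto
  note two_points = sum_if_eq_two_points[OF assms(1-3) this,
      where X = "(s * x m - t) / (x m - x l)" and Y = "(t - s * x l) / (x m - x l)"]
  show "\<forall>j\<in>I. 0 \<le> p j" using assms(4-6) by (simp add: p_def)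
  have "x m - x l \<noteq> 0" using assms(4) by simp
  have "sum p I = (s * x m - t) / (x m - x l) + (t - s * x l) / (x m - x l)"
    using two_points[where w = "\<lambda>_. 1"] by (simp add: p_def)
  also have "\<dots> = s * (x m - x l) / (x m - x l)"
    by (simp add: add_divide_distrib[symmetric] algebra_simps)
  finally show "sum p I = s" using \<open>x m - x l \<noteq> 0\<close> by simp
  have "(\<Sum>j\<in>I. p j * x j) = ((s * x m - t) * x l + (t - s * x l) * x m) / (x m - x l)"
    using two_points[where w = x] by (simp add: p_def add_divide_distrib)
  also have "\<dots> = t * (x m - x l) / (x m - x l)"
    by (simp add: algebra_simps)
  finally show "(\<Sum>j\<in>I. p j * x j) = t" using \<open>x m - x l \<noteq> 0\<close> by simp
  show "(\<Sum>j\<in>I. p j * y j) = chord_value s t (x l) (y l) (x m) (y m)"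
    using two_points[where w = y] by (simp add: p_def chord_value_def add_divide_distrib)
qed

lemma Fpair_eq_chord_value:
  assumes "mu l \<noteq> mu m"
  shows "Fpair mu f c pi1 \<delta> l m
    = pi1 * c + chord_value (1 - pi1) (\<delta> - pi1 * mu 1) (mu l) (f (mu l)) (mu m) (f (mu m))"
proof -
  have "(f (mu m) - f (mu l)) / (mu m - mu l) * (\<delta> - pi1 * mu 1)
      + (mu m * f (mu l) - mu l * f (mu m)) / (mu m - mu l) * (1 - pi1)
      = ((f (mu m) - f (mu l)) * (\<delta> - pi1 * mu 1)
          + (mu m * f (mu l) - mu l * f (mu m)) * (1 - pi1)) / (mu m - mu l)"
    by (simp add: add_divide_distrib)
  also have "\<dots> = chord_value (1 - pi1) (\<delta> - pi1 * mu 1) (mu l) (f (mu l)) (mu m) (f (mu m))"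
    unfolding chord_value_def
    by (rule arg_cong[where f = "\<lambda>z. z / (mu m - mu l)"]) (simp add: algebra_simps)
  finally show ?thesis by (simp add: Fpair_def)
qed

lemma two_point_allocation_feasible:
  assumes "l \<in> {2..N}" "m \<in> {2..N}" "mu l < mu m"
    and "(1 - pi1) * mu l \<le> \<delta> - pi1 * mu 1" "\<delta> - pi1 * mu 1 \<le> (1 - pi1) * mu m"
  shows "let p = (\<lambda>j. if j = l then ((mu m - \<delta>) + pi1 * (mu 1 - mu m)) / (mu m - mu l)
                     else if j = m then (- (mu l - \<delta>) + pi1 * (mu l - mu 1)) / (mu m - mu l)
                     else 0) in
           feasible N mu pi1 \<delta> p \<and> Phi N mu f c pi1 p = Fpair mu f c pi1 \<delta> l m"
proof -
  have "(mu m - \<delta>) + pi1 * (mu 1 - mu m) = (1 - pi1) * mu m - (\<delta> - pi1 * mu 1)"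
    and "- (mu l - \<delta>) + pi1 * (mu l - mu 1) = (\<delta> - pi1 * mu 1) - (1 - pi1) * mu l"
    by (simp_all add: algebra_simps)
  note allocation = two_point_allocation(1-3)[OF _ assms(1-5)]
    two_point_allocation(4)[OF _ assms(1-5), where y = "\<lambda>j. f (mu j)"]
  from allocation \<open>mu l < mu m\<close> show ?thesis
    unfolding Let_def feasible_def Phi_def \<open>(mu m - \<delta>) + _ = _\<close> \<open>- (mu l - \<delta>) + _ = _\<close>
    by (simp add: Fpair_eq_chord_value)
qed

lemma point_mass_optimal:
  assumes "2 \<le> N" and f_mono: "\<And>j. j \<in> {2..N} \<Longrightarrow> f (mu 2) \<le> f (mu j)"
    and "0 \<le> 1 - pi1" "\<delta> - pi1 * mu 1 \<le> (1 - pi1) * mu 2"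
  shows "(let p = (\<lambda>j. if j = 2 then 1 - pi1 else 0) in
            feasible N mu pi1 \<delta> p \<and> Phi N mu f c pi1 p = pi1 * c + (1 - pi1) * f (mu 2))
       \<and> (\<forall>p. feasible N mu pi1 \<delta> p \<longrightarrow> Phi N mu f c pi1 p \<ge> pi1 * c + (1 - pi1) * f (mu 2))"
proof (intro conjI allI impI)
  have "2 \<in> {2..N}" using \<open>2 \<le> N\<close> by simp
  note point_mass = sum_if_eq_point[OF finite_atLeastAtMost this, where X = "1 - pi1"]
  show "let p = (\<lambda>j. if j = 2 then 1 - pi1 else 0) in
      feasible N mu pi1 \<delta> p \<and> Phi N mu f c pi1 p = pi1 * c + (1 - pi1) * f (mu 2)"
    using point_mass[where w = "\<lambda>_. 1"] point_mass[where w = mu]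
      point_mass[where w = "\<lambda>j. f (mu j)"] assms(3,4)
    by (simp add: feasible_def Phi_def algebra_simps)
next
  fix p assume "feasible N mu pi1 \<delta> p"
  then have "f (mu 2) * (1 - pi1) + 0 * (\<delta> - pi1 * mu 1) \<le> (\<Sum>j=2..N. p j * f (mu j))"
    using f_mono by (intro affine_minorant_sum_bound[where x = mu]) (auto simp: feasible_def)
  then show "Phi N mu f c pi1 p \<ge> pi1 * c + (1 - pi1) * f (mu 2)"
    by (simp add: Phi_def algebra_simps)
qed

definition separating_index :: "nat \<Rightarrow> (nat \<Rightarrow> real) \<Rightarrow> real \<Rightarrow> real \<Rightarrow> nat \<Rightarrow> bool" where
  "separating_index N mu pi1 \<delta> k \<longleftrightarrow> k \<in> {2..N}
     \<and> (\<forall>j\<in>{2..N}. j < k \<longrightarrow> (1 - pi1) * mu j < \<delta> - pi1 * mu 1)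
     \<and> (\<forall>j\<in>{2..N}. k \<le> j \<longrightarrow> \<delta> - pi1 * mu 1 < (1 - pi1) * mu j)"

lemma Min_Fpair_le_Phi:
  assumes mono: "strict_mono_on {2..N} mu"
    and f_mono: "\<And>i j. i \<in> {2..N} \<Longrightarrow> j \<in> {2..N} \<Longrightarrow> i \<le> j \<Longrightarrow> f (mu i) \<le> f (mu j)"
    and "2 < k" and separating: "separating_index N mu pi1 \<delta> k"
    and p: "feasible N mu pi1 \<delta> p"
  shows "Min {Fpair mu f c pi1 \<delta> l m | l m. 2 \<le> l \<and> l < k \<and> k \<le> m \<and> m \<le> N}
    \<le> Phi N mu f c pi1 p"
proof -
  have k: "2 < k" "k \<le> N" using \<open>2 < k\<close> separating by (auto simp: separating_index_def)
  define s t where "s = 1 - pi1" and "t = \<delta> - pi1 * mu 1"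
  define L R where "L = {2..<k}" and "R = {k..N}"
  define G where "G i j = chord_value s t (mu i) (f (mu i)) (mu j) (f (mu j))" for i j
  have sep: "mu i < mu j" if "i \<in> L" "j \<in> R" for i j
    using that k by (intro strict_mono_onD[OF mono]) (auto simp: L_def R_def)
  have F_eq_G: "Fpair mu f c pi1 \<delta> i j = pi1 * c + G i j" if "i \<in> L" "j \<in> R" for i j
    using sep[OF that] by (simp add: Fpair_eq_chord_value G_def s_def t_def)
  define V where "V = Min {Fpair mu f c pi1 \<delta> l m | l m. 2 \<le> l \<and> l < k \<and> k \<le> m \<and> m \<le> N}"
  have V_eq: "V = Min ((\<lambda>(i, j). pi1 * c + G i j) ` (L \<times> R))"
    unfolding V_def by (rule arg_cong[where f = Min]) (force simp: L_def R_def F_eq_G)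
  have fin: "finite (L \<times> R)" by (simp add: L_def R_def)
  have "L \<times> R \<noteq> {}" using k by (auto simp: L_def R_def)
  with fin have "V \<in> (\<lambda>(i, j). pi1 * c + G i j) ` (L \<times> R)" unfolding V_eq by simp
  then obtain l m where lm: "l \<in> L" "m \<in> R" and V_lm: "V = pi1 * c + G l m" by auto
  have minimal: "G l m \<le> G i j" if "i \<in> L" "j \<in> R" for i j
    using Min_le[OF finite_imageI[OF fin], of "pi1 * c + G i j"] that V_lm
    unfolding V_eq by force
  define b where "b = (f (mu m) - f (mu l)) / (mu m - mu l)"
  have left: "s * mu i < t" if "i \<in> L" for i
    using separating that by (auto simp: separating_index_def L_def s_def t_def)
  have right: "t < s * mu j" if "j \<in> R" for j
    using separating that by (auto simp: separating_index_def R_def s_def t_def)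
  have "f (mu l) + b * (mu j - mu l) \<le> f (mu j)" if "j \<in> L \<union> R" for j
    unfolding b_def using minimal that
    by (intro chord_value_minimal_imp_supporting_line[OF sep left right lm]) (auto simp: G_def)
  moreover have "L \<union> R = {2..N}" using k by (auto simp: L_def R_def)
  ultimately have minorant: "f (mu l) - b * mu l + b * mu j \<le> f (mu j)" if "j \<in> {2..N}" for j
    using that by (force simp: algebra_simps)
  have "mu l < mu m" using sep lm by blast
  then have "0 \<le> b" using f_mono lm by (simp add: b_def L_def R_def)
  have "b * (mu m - mu l) = f (mu m) - f (mu l)" using \<open>mu l < mu m\<close> by (simp add: b_def)
  then have "G l m = (f (mu l) - b * mu l) * s + b * t"
    using chord_value_affine[of "mu l" "mu m" s t "f (mu l) - b * mu l" b] \<open>mu l < mu m\<close>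
    by (simp add: G_def algebra_simps)
  also have "\<dots> \<le> (\<Sum>j=2..N. p j * f (mu j))"
    using p \<open>0 \<le> b\<close> minorant
    by (intro affine_minorant_sum_bound[where x = mu]) (auto simp: feasible_def s_def t_def)
  finally show ?thesis using V_lm by (simp add: V_def Phi_def)
qed

lemma optimal_allocation_of_separating_index:
  assumes mono: "strict_mono_on {2..N} mu"
    and f_mono: "\<And>i j. i \<in> {2..N} \<Longrightarrow> j \<in> {2..N} \<Longrightarrow> i \<le> j \<Longrightarrow> f (mu i) \<le> f (mu j)"
    and "0 < 1 - pi1" and separating: "separating_index N mu pi1 \<delta> k"
  shows "(k = 2 \<longrightarrow>
       (let p = (\<lambda>j. if j = 2 then 1 - pi1 else 0) in
          feasible N mu pi1 \<delta> p \<and>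
          Phi N mu f c pi1 p = pi1 * c + (1 - pi1) * f (mu 2)) \<and>
       (\<forall>p. feasible N mu pi1 \<delta> p \<longrightarrow>
          Phi N mu f c pi1 p \<ge> pi1 * c + (1 - pi1) * f (mu 2))) \<and>
    (k > 2 \<longrightarrow>
       (let V = Min {Fpair mu f c pi1 \<delta> l m | l m. 2 \<le> l \<and> l < k \<and> k \<le> m \<and> m \<le> N} in
          (\<forall>p. feasible N mu pi1 \<delta> p \<longrightarrow> Phi N mu f c pi1 p \<ge> V) \<and>
          (\<forall>l m. 2 \<le> l \<and> l < k \<and> k \<le> m \<and> m \<le> N \<and> Fpair mu f c pi1 \<delta> l m = V \<longrightarrow>
             (let p = (\<lambda>j. if j = l then ((mu m - \<delta>) + pi1 * (mu 1 - mu m)) / (mu m - mu l)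
                           else if j = m then (- (mu l - \<delta>) + pi1 * (mu l - mu 1)) / (mu m - mu l)
                           else 0) in
                feasible N mu pi1 \<delta> p \<and> Phi N mu f c pi1 p = V))))"
    (is "(_ \<longrightarrow> ?point_mass_feasible \<and> ?point_mass_optimal) \<and> (_ \<longrightarrow> ?two_point)")
proof -
  have "k \<in> {2..N}"
    and below: "\<And>j. j \<in> {2..N} \<Longrightarrow> j < k \<Longrightarrow> (1 - pi1) * mu j < \<delta> - pi1 * mu 1"
    and above: "\<And>j. j \<in> {2..N} \<Longrightarrow> k \<le> j \<Longrightarrow> \<delta> - pi1 * mu 1 < (1 - pi1) * mu j"
    using separating by (auto simp: separating_index_def)
  show ?thesis
  proof (intro conjI impI)
    assume "k = 2"
    with \<open>k \<in> {2..N}\<close> have "2 \<le> N" "\<delta> - pi1 * mu 1 \<le> (1 - pi1) * mu 2"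
      using above[of 2] by auto
    moreover have "f (mu 2) \<le> f (mu j)" if "j \<in> {2..N}" for j
      using f_mono[of 2 j] that by simp
    ultimately have "?point_mass_feasible \<and> ?point_mass_optimal"
      using point_mass_optimal[where f = f and c = c] \<open>0 < 1 - pi1\<close> by simp
    then show ?point_mass_feasible and ?point_mass_optimal by simp_all
  next
    assume "2 < k"
    have pair: "l \<in> {2..N}" "m \<in> {2..N}" "mu l < mu m"
      "(1 - pi1) * mu l \<le> \<delta> - pi1 * mu 1" "\<delta> - pi1 * mu 1 \<le> (1 - pi1) * mu m"
      if "2 \<le> l" "l < k" "k \<le> m" "m \<le> N" for l m
      using that \<open>k \<in> {2..N}\<close> below[of l] above[of m] strict_mono_onD[OF mono, of l m]
      by (auto simp: less_imp_le)
    show ?two_point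
      using Min_Fpair_le_Phi[where f = f and c = c, OF mono f_mono \<open>2 < k\<close> separating]
        two_point_allocation_feasible[where mu = mu and f = f and c = c, OF pair] \<open>k \<in> {2..N}\<close>
      unfolding Let_def by auto
  qed
qed

lemma kstar_threshold:
  assumes mono: "strict_mono_on {2..N} mu"
    and j0: "j0 \<in> {2..N}" "- pi1 * mu 1 / (1 - pi1) < mu j0"
  shows "kstar N mu pi1 \<in> {2..N}"
    and "\<And>j. j \<in> {2..N} \<Longrightarrow> - pi1 * mu 1 / (1 - pi1) < mu j \<longleftrightarrow> kstar N mu pi1 \<le> j"
proof -
  define \<theta> where "\<theta> = - pi1 * mu 1 / (1 - pi1)"
  define S where "S = {mu k' | k'. k' \<in> {2..N} \<and> mu k' > \<theta>}"
  have "finite S" by (simp add: S_def)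
  moreover have "S \<noteq> {}" using j0 by (auto simp: S_def \<theta>_def)
  ultimately have "Min S \<in> S" by (rule Min_in)
  then obtain k where k: "k \<in> {2..N}" "mu k = Min S" "\<theta> < mu k" by (auto simp: S_def)
  have "kstar N mu pi1 = k"
    unfolding kstar_def \<theta>_def[symmetric] S_def[symmetric]
  proof (rule the_equality)
    fix k' assume "k' \<in> {2..N} \<and> mu k' = Min S"
    then show "k' = k" using k strict_mono_on_eqD[OF mono, of k' k] by simp
  qed (use k in simp)
  then show "kstar N mu pi1 \<in> {2..N}" using k by simp
  fix j assume j: "j \<in> {2..N}"
  have "\<theta> < mu j \<longleftrightarrow> mu k \<le> mu j"
  proof
    assume "\<theta> < mu j"
    then have "mu j \<in> S" using j by (auto simp: S_def)
    then show "mu k \<le> mu j" using \<open>finite S\<close> k by simp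
  qed (use k in simp)
  also have "\<dots> \<longleftrightarrow> k \<le> j" using strict_mono_on_less_eq[OF mono k(1) j] .
  finally show "- pi1 * mu 1 / (1 - pi1) < mu j \<longleftrightarrow> kstar N mu pi1 \<le> j"
    using \<open>kstar N mu pi1 = k\<close> by (simp add: \<theta>_def)
qed

lemma admissible_pi1_bounds:
  fixes pi1 \<delta> :: real
  assumes "mu 1 \<le> 0" "0 < mu N" "0 < pi1" "0 < \<delta>" "pi1 \<le> (mu N - \<delta>) / (mu N - mu 1)"
  shows "0 < 1 - pi1" and "\<delta> - pi1 * mu 1 \<le> (1 - pi1) * mu N"
proof -
  have "pi1 * (mu N - mu 1) \<le> mu N - \<delta>" using assms by (simp add: le_divide_eq)
  then show "\<delta> - pi1 * mu 1 \<le> (1 - pi1) * mu N" by (simp add: algebra_simps)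
  show "0 < 1 - pi1"
  proof (rule ccontr)
    assume "\<not> 0 < 1 - pi1"
    then have "mu N \<le> pi1 * mu N" using assms(2) by (simp add: mult_le_cancel_right1)
    moreover have "0 \<le> - pi1 * mu 1" using assms(1,3) by (simp add: mult_nonneg_nonpos)
    moreover have "(1 - pi1) * mu N = mu N - pi1 * mu N" by (simp add: left_diff_distrib)
    ultimately show False using \<open>\<delta> - pi1 * mu 1 \<le> (1 - pi1) * mu N\<close> assms(4) by linarith
  qed
qed

lemma kstar_separates_for_small_delta:
  assumes mono: "strict_mono_on {2..N} mu" and "N \<in> {2..N}"
    and "mu 1 \<le> 0" "0 < mu N" "0 < pi1"
  obtains \<delta>0 where "0 < \<delta>0"
    and "\<And>\<delta>. 0 < \<delta> \<Longrightarrow> \<delta> < \<delta>0 \<Longrightarrow> pi1 \<le> (mu N - \<delta>) / (mu N - mu 1) \<Longrightarrow>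
      0 < 1 - pi1 \<and> separating_index N mu pi1 \<delta> (kstar N mu pi1)"
proof -
  let ?g = "\<lambda>j. (1 - pi1) * mu j + pi1 * mu 1"
  obtain \<delta>0 where "0 < \<delta>0" and \<delta>0: "\<And>x. x \<in> ?g ` {2..N} \<Longrightarrow> 0 < x \<Longrightarrow> \<delta>0 \<le> x"
    by (rule finite_positive_lower_bound[of "?g ` {2..N}"]) auto
  show thesis
  proof (rule that[OF \<open>0 < \<delta>0\<close>])
    fix \<delta> assume "0 < \<delta>" "\<delta> < \<delta>0" "pi1 \<le> (mu N - \<delta>) / (mu N - mu 1)"
    note bounds = admissible_pi1_bounds[OF assms(3-5) this(1,3)]
    have threshold: "- pi1 * mu 1 / (1 - pi1) < mu j \<longleftrightarrow> 0 < ?g j" for j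
      unfolding pos_divide_less_eq[OF bounds(1)] by (simp add: algebra_simps)
    then have "- pi1 * mu 1 / (1 - pi1) < mu N" using bounds(2) \<open>0 < \<delta>\<close> by simp
    note kstar = kstar_threshold[OF mono \<open>N \<in> {2..N}\<close> this]
    have split: "0 < ?g j \<longleftrightarrow> kstar N mu pi1 \<le> j" if "j \<in> {2..N}" for j
      using kstar(2)[OF that] threshold by simp
    show "0 < 1 - pi1 \<and> separating_index N mu pi1 \<delta> (kstar N mu pi1)"
      using bounds(1) kstar(1) split \<delta>0 \<open>0 < \<delta>\<close> \<open>\<delta> < \<delta>0\<close>
      by (force simp: separating_index_def algebra_simps)
  qed
qed

theorem theorem3:
  fixes N :: nat and mu :: "nat \<Rightarrow> real" and f :: "real \<Rightarrow> real" and c pi1 :: real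
  assumes hN: "N \<ge> 2"
    and hmu1: "mu 1 \<le> 0" and hmu2: "0 < mu 2"
    and hmono: "strict_mono_on {2..N} mu"
    and hpi1: "0 < pi1"
    and hfpos: "\<forall>x>0. f x > 0"
    and hfdiff: "\<forall>x>0. f differentiable (at x)"
    and hfderiv: "\<forall>x>0. deriv f x \<ge> 0"
  shows "\<exists>\<delta>0>0. \<forall>\<delta>. 0 < \<delta> \<and> \<delta> < \<delta>0 \<and> pi1 \<le> (mu N - \<delta>) / (mu N - mu 1) \<longrightarrow>
    (kstar N mu pi1 = 2 \<longrightarrow>
       (let p = (\<lambda>j. if j = 2 then 1 - pi1 else 0) in
          feasible N mu pi1 \<delta> p \<and>
          Phi N mu f c pi1 p = pi1 * c + (1 - pi1) * f (mu 2)) \<and>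
       (\<forall>p. feasible N mu pi1 \<delta> p \<longrightarrow>
          Phi N mu f c pi1 p \<ge> pi1 * c + (1 - pi1) * f (mu 2))) \<and>
    (kstar N mu pi1 > 2 \<longrightarrow>
       (let k = kstar N mu pi1;
            V = Min {Fpair mu f c pi1 \<delta> l m | l m. 2 \<le> l \<and> l < k \<and> k \<le> m \<and> m \<le> N} in
          (\<forall>p. feasible N mu pi1 \<delta> p \<longrightarrow> Phi N mu f c pi1 p \<ge> V) \<and>
          (\<forall>l m. 2 \<le> l \<and> l < k \<and> k \<le> m \<and> m \<le> N \<and> Fpair mu f c pi1 \<delta> l m = V \<longrightarrow>
             (let p = (\<lambda>j. if j = l then ((mu m - \<delta>) + pi1 * (mu 1 - mu m)) / (mu m - mu l)
                           else if j = m then (- (mu l - \<delta>) + pi1 * (mu l - mu 1)) / (mu m - mu l)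
                           else 0) in
                feasible N mu pi1 \<delta> p \<and> Phi N mu f c pi1 p = V))))"
proof -
  have "N \<in> {2..N}" using hN by simp
  have mu_pos: "0 < mu j" if "j \<in> {2..N}" for j
    using hmu2 strict_mono_on_leD[OF hmono, of 2 j] that by force
  have f_mono: "f (mu i) \<le> f (mu j)" if "i \<in> {2..N}" "j \<in> {2..N}" "i \<le> j" for i j
    using mono_onD[OF mono_on_greaterThan_if_deriv_nonneg[OF hfdiff hfderiv]]
      mu_pos strict_mono_on_leD[OF hmono] that by simp
  obtain \<delta>0 where "0 < \<delta>0" and separation:
    "\<And>\<delta>. 0 < \<delta> \<Longrightarrow> \<delta> < \<delta>0 \<Longrightarrow> pi1 \<le> (mu N - \<delta>) / (mu N - mu 1) \<Longrightarrow>
      0 < 1 - pi1 \<and> separating_index N mu pi1 \<delta> (kstar N mu pi1)"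
    using kstar_separates_for_small_delta[OF hmono \<open>N \<in> {2..N}\<close> hmu1 mu_pos[OF \<open>N \<in> {2..N}\<close>] hpi1] by blast
  show ?thesis
    unfolding Let_def
    by (intro exI[of _ \<delta>0] conjI[OF \<open>0 < \<delta>0\<close>] allI impI, elim conjE,
        rule optimal_allocation_of_separating_index[where f = f and c = c, OF hmono f_mono,
          unfolded Let_def])
      (use separation in blast)+
qed

end
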